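(* Let $f:\mathbb{R}^n\to\mathbb{R}$ be convex and differentiable with $\nabla f$ $L$-Lipschitz continuous, and assume $X^*$ is non-empty. Then the sequence $\{x^k\}$ generated by Algorithm 3 (with $\nabla f(x^k)\ne0$ for all $k$) satisfies, for every $x^*\in X^*$ and every integer $K\ge1$, $$\frac1K\sum_{k=0}^{K-1}\|\nabla f(x^k)\|^2\le\frac{\|x^0-x^*\|^2}{K\kappa_4h_{\min}^2},$$ where $\alpha_{\min}=\frac{(1-\beta)\left(1-\frac{L\overline{h}}{4}\right)+\beta(1-\nu)}{2+2\beta^2\nu^2}$, $\kappa_4=\eta(2-\eta)\alpha_{\min}\left((1-\beta)\left(1-\frac{L\overline{h}}{4}\right)+\beta(1-\nu)\right)$ and $h_{\min}=\min\left\{\underline{h},\frac{\nu\theta}{\overline{h}\max\{L,1\}^2}\right\}$.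
   Context: $X^*=\{x:\nabla f(x)=0\}$ (the set of minimizers of the convex $f$). Algorithm 3: parameters $0<\mu<\nu<1$, $0<\underline{h}<1\le\gamma_0^0\le\overline{h}<\frac4L$, $0\le\beta\le1$, $\theta\in(0,1)$, $\tau>1$, $\eta\in(0,2)$, starting point $x^0$; run while $\nabla f(x^k)\neq0$. At iteration $k$: for $\gamma>0$ let $z^k(\gamma)=x^k-\gamma\nabla f(x^k)$ and $r_k(\gamma)=\gamma\|\nabla f(z^k(\gamma))-\nabla f(x^k)\|/\|z^k(\gamma)-x^k\|$; starting from $\gamma_0^k$, while $r_k(\gamma_l^k)>\nu$ set $\gamma_{l+1}^k=\gamma_l^k\theta\min\{1,1/r_k(\gamma_l^k)\}$; let $h_k$ be the first $\gamma_l^k$ with $r_k(\gamma_l^k)\le\nu$. Then $z^k=x^k-h_k\nabla f(x^k)$ and $x^{k+1}=x^k-\eta\alpha_kh_k\big(\nabla f(x^k)-\beta(\nabla f(x^k)-\nabla f(z^k))\big)$ with $$\alpha_k=\frac{(1-\beta)\left(1-\frac{Lh_k}{4}\right)\|x^k-z^k\|^2+\beta\langle x^k-z^k,h_k\nabla f(z^k)\rangle}{h_k^2\|\nabla f(x^k)-\beta(\nabla f(x^k)-\nabla f(z^k))\|^2};$$ finally $\gamma_0^{k+1}=\mathbf{P}_{[\underline{h},\overline{h}]}(\tau h_k)$ if $r_k(h_k)\le\mu$, else $\gamma_0^{k+1}=\mathbf{P}_{[\underline{h},\overline{h}]}(h_k)$, where $\mathbf{P}_{[a,b]}$ is projection onto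 $[a,b]$. *)

theory Defs
  imports "HOL-Analysis.Analysis"
begin

definition ratio :: "('a::real_normed_vector \<Rightarrow> 'a) \<Rightarrow> 'a \<Rightarrow> real \<Rightarrow> real" where
  "ratio g x \<gamma> = \<gamma> * norm (g (x - \<gamma> *\<^sub>R g x) - g x) / norm ((x - \<gamma> *\<^sub>R g x) - x)"

primrec trial :: "('a::real_normed_vector \<Rightarrow> 'a) \<Rightarrow> real \<Rightarrow> real \<Rightarrow> 'a \<Rightarrow> real \<Rightarrow> nat \<Rightarrow> real" where
  "trial g \<nu> \<theta> x \<gamma>0 0 = \<gamma>0"
| "trial g \<nu> \<theta> x \<gamma>0 (Suc l) =
     (let \<gamma> = trial g \<nu> \<theta> x \<gamma>0 l in
      if ratio g x \<gamma> > \<nu> then \<gamma> * \<theta> * min 1 (1 / ratio g x \<gamma>) else \<gamma>)"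

definition linesearch :: "('a::real_normed_vector \<Rightarrow> 'a) \<Rightarrow> real \<Rightarrow> real \<Rightarrow> 'a \<Rightarrow> real \<Rightarrow> real" where
  "linesearch g \<nu> \<theta> x \<gamma>0 =
     trial g \<nu> \<theta> x \<gamma>0 (LEAST l. ratio g x (trial g \<nu> \<theta> x \<gamma>0 l) \<le> \<nu>)"

definition proj_interval :: "real \<Rightarrow> real \<Rightarrow> real \<Rightarrow> real" where
  "proj_interval a b t = max a (min b t)"

(* one iteration of Algorithm 3: state (x^k, gamma_0^k) \<mapsto> (x^{k+1}, gamma_0^{k+1}) *)
definition alg3_step ::
  "('a::real_inner \<Rightarrow> 'a) \<Rightarrow> real \<Rightarrow> real \<Rightarrow> real \<Rightarrow> real \<Rightarrow> real \<Rightarrow> real \<Rightarrow> real \<Rightarrow> real \<Rightarrow> real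
   \<Rightarrow> 'a \<times> real \<Rightarrow> 'a \<times> real" where
  "alg3_step g L \<mu> \<nu> hlo hup \<beta> \<theta> \<tau> \<eta> s =
     (let x = fst s; \<gamma>0 = snd s;
          h = linesearch g \<nu> \<theta> x \<gamma>0;
          z = x - h *\<^sub>R g x;
          d = g x - \<beta> *\<^sub>R (g x - g z);
          \<alpha> = ((1 - \<beta>) * (1 - L * h / 4) * (norm (x - z))\<^sup>2 + \<beta> * inner (x - z) (h *\<^sub>R g z))
              / (h\<^sup>2 * (norm d)\<^sup>2);
          x' = x - (\<eta> * \<alpha> * h) *\<^sub>R d;
          \<gamma>0' = (if ratio g x h \<le> \<mu> then proj_interval hlo hup (\<tau> * h) else proj_interval hlo hup h)
      in (x', \<gamma>0'))"

primrec alg3 ::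
  "('a::real_inner \<Rightarrow> 'a) \<Rightarrow> real \<Rightarrow> real \<Rightarrow> real \<Rightarrow> real \<Rightarrow> real \<Rightarrow> real \<Rightarrow> real \<Rightarrow> real \<Rightarrow> real
   \<Rightarrow> 'a \<Rightarrow> real \<Rightarrow> nat \<Rightarrow> 'a \<times> real" where
  "alg3 g L \<mu> \<nu> hlo hup \<beta> \<theta> \<tau> \<eta> x0 \<gamma>00 0 = (x0, \<gamma>00)"
| "alg3 g L \<mu> \<nu> hlo hup \<beta> \<theta> \<tau> \<eta> x0 \<gamma>00 (Suc k) =
     alg3_step g L \<mu> \<nu> hlo hup \<beta> \<theta> \<tau> \<eta> (alg3 g L \<mu> \<nu> hlo hup \<beta> \<theta> \<tau> \<eta> x0 \<gamma>00 k)"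

end

theory Submission
  imports Defs
begin

text \<open>Cocoercivity of the gradient and the line-search test \<open>r\<^sub>k(h\<^sub>k) \<le> \<nu>\<close> make the
  direction \<open>d\<^sub>k = \<nabla>f(x\<^sup>k) - \<beta>(\<nabla>f(x\<^sup>k) - \<nabla>f(z\<^sup>k))\<close> correlate with \<open>x\<^sup>k - x\<^sup>*\<close>:
  \<open>h\<^sub>k\<langle>d\<^sub>k, x\<^sup>k - x\<^sup>*\<rangle> \<ge> h\<^sub>k\<^sup>2 N\<^sub>k\<close>, where \<open>N\<^sub>k = \<alpha>\<^sub>k\<parallel>d\<^sub>k\<parallel>\<^sup>2\<close> is the numerator of \<open>\<alpha>\<^sub>k\<close> divided by \<open>h\<^sub>k\<^sup>2\<close>.
  Expanding the square then gives the decrease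
  \<open>\<parallel>x\<^sup>k\<^sup>+\<^sup>1 - x\<^sup>*\<parallel>\<^sup>2 \<le> \<parallel>x\<^sup>k - x\<^sup>*\<parallel>\<^sup>2 - \<eta>(2 - \<eta>) h\<^sub>k\<^sup>2 \<alpha>\<^sub>k N\<^sub>k\<close>, and \<open>\<alpha>\<^sub>k N\<^sub>k \<ge> \<alpha>\<^sub>m\<^sub>i\<^sub>n c \<parallel>\<nabla>f(x\<^sup>k)\<parallel>\<^sup>2\<close>
  because \<open>\<parallel>d\<^sub>k\<parallel> \<le> (1 + \<beta>\<nu>)\<parallel>\<nabla>f(x\<^sup>k)\<parallel>\<close>. The backtracking loop terminates and never cuts
  the step below \<open>min \<gamma>\<^sub>0\<^sup>k (\<theta>\<nu>/L) \<ge> h\<^sub>m\<^sub>i\<^sub>n\<close>, so summing the decrease telescopes to the bound.\<close>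

lemma gderiv_along_line:
  fixes f :: "'a::real_inner \<Rightarrow> real"
  assumes grad: "\<And>x. GDERIV f x :> g x"
  shows "((\<lambda>t. f (x + t *\<^sub>R v)) has_real_derivative inner v (g (x + t *\<^sub>R v))) (at t)"
proof -
  have line: "((\<lambda>t. x + t *\<^sub>R v) has_derivative (\<lambda>s. s *\<^sub>R v)) (at t)"
    by (auto intro!: derivative_eq_intros)
  have "(f has_derivative (\<lambda>h. inner h (g (x + t *\<^sub>R v)))) (at (x + t *\<^sub>R v))"
    using grad[of "x + t *\<^sub>R v"] by (simp add: gderiv_def)
  from has_derivative_compose[OF line this]
  have "((\<lambda>t. f (x + t *\<^sub>R v)) has_derivative (\<lambda>s. inner (s *\<^sub>R v) (g (x + t *\<^sub>R v)))) (at t)"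
    by (simp add: o_def)
  moreover have "(\<lambda>s. inner (s *\<^sub>R v) (g (x + t *\<^sub>R v))) = (*) (inner v (g (x + t *\<^sub>R v)))"
    by (simp add: fun_eq_iff mult.commute)
  ultimately show ?thesis by (simp add: has_field_derivative_def)
qed

lemma convex_gderiv_tangent_le:
  fixes f :: "'a::real_inner \<Rightarrow> real"
  assumes convex: "convex_on UNIV f" and grad: "\<And>x. GDERIV f x :> g x"
  shows "f x + inner (g x) (y - x) \<le> f y"
proof -
  define \<phi> where "\<phi> = (\<lambda>t::real. f (x + t *\<^sub>R (y - x)))"
  have convex_line: "convex_on UNIV \<phi>"
  proof (rule convex_onI)
    fix t a b :: real assume "0 < t" "t < 1"
    have "x + ((1 - t) *\<^sub>R a + t *\<^sub>R b) *\<^sub>R (y - x)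
        = (1 - t) *\<^sub>R (x + a *\<^sub>R (y - x)) + t *\<^sub>R (x + b *\<^sub>R (y - x))"
      by (simp add: algebra_simps)
    with convex_onD[OF convex, of t "x + a *\<^sub>R (y - x)" "x + b *\<^sub>R (y - x)"] \<open>0 < t\<close> \<open>t < 1\<close>
    show "\<phi> ((1 - t) *\<^sub>R a + t *\<^sub>R b) \<le> (1 - t) * \<phi> a + t * \<phi> b"
      by (simp add: \<phi>_def)
  qed simp
  have "(\<phi> has_real_derivative inner (y - x) (g x)) (at 0 within UNIV)"
    using gderiv_along_line[OF grad, of x "y - x" 0] by (simp add: \<phi>_def)
  from convex_on_imp_above_tangent[OF convex_line _ _ _ this, of 1]
  have "inner (y - x) (g x) \<le> \<phi> 1 - \<phi> 0" by simp
  then show ?thesis by (simp add: \<phi>_def inner_commute)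
qed

lemma lipschitz_gderiv_upper_bound:
  fixes f :: "'a::real_inner \<Rightarrow> real"
  assumes grad: "\<And>x. GDERIV f x :> g x" and lip: "L-lipschitz_on UNIV g"
  shows "f y \<le> f x + inner (g x) (y - x) + L / 2 * (norm (y - x))\<^sup>2"
proof -
  define v where "v = y - x"
  define \<psi> where "\<psi> = (\<lambda>t. f (x + t *\<^sub>R v) - t * inner v (g x) - L / 2 * t\<^sup>2 * (norm v)\<^sup>2)"
  have "\<psi> 1 \<le> \<psi> 0"
  proof (rule DERIV_nonpos_imp_nonincreasing[where f = \<psi>])
    fix t :: real assume t: "0 \<le> t" "t \<le> 1"
    define \<psi>' where "\<psi>' = inner v (g (x + t *\<^sub>R v)) - inner v (g x) - L * t * (norm v)\<^sup>2"
    have "(\<psi> has_real_derivative \<psi>') (at t)"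
      unfolding \<psi>_def \<psi>'_def
      by (auto intro!: derivative_eq_intros gderiv_along_line[OF grad])
    moreover have "\<psi>' \<le> 0"
    proof -
      have "inner v (g (x + t *\<^sub>R v)) - inner v (g x) \<le> norm v * norm (g (x + t *\<^sub>R v) - g x)"
        using norm_cauchy_schwarz[of v "g (x + t *\<^sub>R v) - g x"] by (simp add: inner_diff_right)
      also have "\<dots> \<le> norm v * (L * norm (t *\<^sub>R v))"
        using lipschitz_onD[OF lip, of "x + t *\<^sub>R v" x] by (simp add: dist_norm mult_left_mono)
      also have "\<dots> = L * t * (norm v)\<^sup>2" using t by (simp add: power2_eq_square)
      finally show ?thesis by (simp add: \<psi>'_def)
    qed
    ultimately show "\<exists>y. (\<psi> has_real_derivative y) (at t) \<and> y \<le> 0" by blast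
  qed simp
  then show ?thesis by (simp add: \<psi>_def v_def inner_commute)
qed

text \<open>At a minimiser \<open>x\<^sup>*\<close>, compare \<open>f\<close> at \<open>x - \<nabla>f(x)/L\<close> and \<open>x\<^sup>* + \<nabla>f(x)/L\<close> with the tangent
  and the quadratic upper bound at \<open>x\<close> and \<open>x\<^sup>*\<close>.\<close>

lemma convex_gderiv_cocoercive_at_min:
  fixes f :: "'a::real_inner \<Rightarrow> real"
  assumes convex: "convex_on UNIV f" and grad: "\<And>x. GDERIV f x :> g x"
    and lip: "L-lipschitz_on UNIV g" and L: "L > 0" and xs: "g xs = 0"
  shows "(norm (g x))\<^sup>2 / L \<le> inner (g x) (x - xs)"
proof -
  define a where "a = g x"
  define q where "q = (norm a)\<^sup>2 / L"
  have aa: "inner a a = (norm a)\<^sup>2" by (simp add: power2_norm_eq_inner)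
  have half: "L / 2 * (norm ((1 / L) *\<^sub>R a))\<^sup>2 = q / 2"
    using L by (simp add: q_def power2_eq_square field_simps)
  have "f xs \<le> f (x - (1 / L) *\<^sub>R a)"
    using convex_gderiv_tangent_le[OF convex grad, of xs "x - (1 / L) *\<^sub>R a"] xs by simp
  also have "\<dots> \<le> f x - q + q / 2"
    using lipschitz_gderiv_upper_bound[OF grad lip, of "x - (1 / L) *\<^sub>R a" x] half
    by (simp add: a_def[symmetric] q_def aa)
  finally have lower: "f xs \<le> f x - q / 2" by simp
  have "f x - inner a (x - xs) + q \<le> f (xs + (1 / L) *\<^sub>R a)"
    using convex_gderiv_tangent_le[OF convex grad, of x "xs + (1 / L) *\<^sub>R a"]
    by (simp add: a_def[symmetric] q_def aa inner_diff_right inner_add_right)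
  also have "\<dots> \<le> f xs + q / 2"
    using lipschitz_gderiv_upper_bound[OF grad lip, of "xs + (1 / L) *\<^sub>R a" xs] half xs by simp
  finally have "q \<le> inner a (x - xs)" using lower by simp
  then show ?thesis by (simp add: q_def a_def)
qed

lemma convex_gderiv_monotone_at_min:
  fixes f :: "'a::real_inner \<Rightarrow> real"
  assumes convex: "convex_on UNIV f" and grad: "\<And>x. GDERIV f x :> g x" and xs: "g xs = 0"
  shows "0 \<le> inner (g z) (z - xs)"
  using convex_gderiv_tangent_le[OF convex grad, of z xs] convex_gderiv_tangent_le[OF convex grad, of xs z] xs
  by (simp add: inner_diff_right)

lemma ratio_eq:
  assumes "g x \<noteq> 0" "\<gamma> > 0"
  shows "ratio g x \<gamma> = norm (g (x - \<gamma> *\<^sub>R g x) - g x) / norm (g x)"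
  using assms by (simp add: ratio_def)

lemma ratio_le_lipschitz:
  assumes lip: "L-lipschitz_on UNIV g" and gx: "g x \<noteq> 0" and \<gamma>: "\<gamma> > 0"
  shows "ratio g x \<gamma> \<le> L * \<gamma>"
proof -
  have "norm (g (x - \<gamma> *\<^sub>R g x) - g x) \<le> L * (\<gamma> * norm (g x))"
    using lipschitz_onD[OF lip, of "x - \<gamma> *\<^sub>R g x" x] \<gamma> by (simp add: dist_norm)
  then show ?thesis using gx \<gamma> by (simp add: ratio_eq divide_le_eq mult.assoc)
qed

context
  fixes g :: "'a::real_normed_vector \<Rightarrow> 'a" and L \<nu> \<theta> \<gamma>0 :: real and x :: 'a
  assumes lip: "L-lipschitz_on UNIV g" and L: "L > 0" and gx: "g x \<noteq> 0"
    and \<nu>: "0 < \<nu>" "\<nu> < 1" and \<theta>: "0 < \<theta>" "\<theta> < 1" and \<gamma>0: "\<gamma>0 > 0"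
begin

lemma trial_pos: "0 < trial g \<nu> \<theta> x \<gamma>0 l"
proof (induction l)
  case (Suc l)
  then show ?case
    using \<nu> \<theta> by (auto simp: Let_def zero_less_mult_iff)
qed (use \<gamma>0 in simp)

lemma trial_Suc_le_shrink:
  assumes "ratio g x (trial g \<nu> \<theta> x \<gamma>0 l) > \<nu>"
  shows "trial g \<nu> \<theta> x \<gamma>0 (Suc l) \<le> \<theta> * trial g \<nu> \<theta> x \<gamma>0 l"
proof -
  have "min 1 (1 / ratio g x (trial g \<nu> \<theta> x \<gamma>0 l)) \<le> 1" by simp
  then have "trial g \<nu> \<theta> x \<gamma>0 l * min 1 (1 / ratio g x (trial g \<nu> \<theta> x \<gamma>0 l))
      \<le> trial g \<nu> \<theta> x \<gamma>0 l"
    using trial_pos[of l] by (simp add: mult_left_le)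
  then show ?thesis
    using assms \<theta> by (simp add: Let_def mult_ac)
qed

lemma trial_Suc_le: "trial g \<nu> \<theta> x \<gamma>0 (Suc l) \<le> trial g \<nu> \<theta> x \<gamma>0 l"
proof (cases "ratio g x (trial g \<nu> \<theta> x \<gamma>0 l) > \<nu>")
  case True
  have "\<theta> * trial g \<nu> \<theta> x \<gamma>0 l \<le> trial g \<nu> \<theta> x \<gamma>0 l"
    using trial_pos[of l] \<theta> by (simp add: mult_le_cancel_right1)
  with trial_Suc_le_shrink[OF True] show ?thesis by linarith
qed (simp add: Let_def)

lemma trial_le_init: "trial g \<nu> \<theta> x \<gamma>0 l \<le> \<gamma>0"
proof (induction l)
  case (Suc l)
  then show ?case using trial_Suc_le[of l] by linarith
qed simp

lemma trial_Suc_ge: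
  assumes r: "ratio g x (trial g \<nu> \<theta> x \<gamma>0 l) > \<nu>"
  shows "\<theta> * \<nu> / L \<le> trial g \<nu> \<theta> x \<gamma>0 (Suc l)"
proof -
  define t where "t = trial g \<nu> \<theta> x \<gamma>0 l"
  define r where "r = ratio g x t"
  have t: "t > 0" and rt: "r \<le> L * t" and \<nu>r: "\<nu> < r"
    using trial_pos ratio_le_lipschitz[OF lip gx] r by (auto simp: t_def r_def)
  have next_trial: "trial g \<nu> \<theta> x \<gamma>0 (Suc l) = t * \<theta> * min 1 (1 / r)"
    using r by (simp add: Let_def t_def r_def)
  have "\<theta> * \<nu> / L \<le> t * \<theta> * min 1 (1 / r)"
  proof (cases "r \<le> 1")
    case True
    have "\<theta> * \<nu> \<le> (\<theta> * t) * L" using \<nu>r rt \<theta> by (simp add: mult_left_mono mult_ac)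
    then have "\<theta> * \<nu> / L \<le> \<theta> * t" by (simp add: pos_divide_le_eq[OF L])
    moreover have "min 1 (1 / r) = 1" using True \<nu>r \<nu> by simp
    ultimately show ?thesis by (simp add: mult.commute)
  next
    case False
    have "\<nu> * r \<le> L * t" using mult_right_mono[of \<nu> 1 r] \<nu> False rt by linarith
    then have "\<theta> * \<nu> * r \<le> (\<theta> * t) * L"
      using \<theta> mult_left_mono[of "\<nu> * r" "L * t" \<theta>] by (simp add: mult_ac)
    then have "(\<theta> * \<nu> / L) * r \<le> \<theta> * t" by (simp add: pos_divide_le_eq[OF L])
    then have "\<theta> * \<nu> / L \<le> \<theta> * t / r" using \<nu>r \<nu> by (simp add: pos_le_divide_eq)
    moreover have "min 1 (1 / r) = 1 / r" using False by simp
    ultimately show ?thesis by (simp add: mult.commute)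
  qed
  then show ?thesis by (simp only: next_trial)
qed

lemma trial_le_geometric:
  "(\<And>j. j < l \<Longrightarrow> ratio g x (trial g \<nu> \<theta> x \<gamma>0 j) > \<nu>) \<Longrightarrow> trial g \<nu> \<theta> x \<gamma>0 l \<le> \<gamma>0 * \<theta> ^ l"
proof (induction l)
  case (Suc l)
  then have "trial g \<nu> \<theta> x \<gamma>0 (Suc l) \<le> \<theta> * (\<gamma>0 * \<theta> ^ l)"
    using trial_Suc_le_shrink[of l] \<theta> by (meson less_Suc_eq mult_left_mono order.trans less_imp_le)
  then show ?case by (simp add: mult_ac)
qed simp

lemma trial_terminates: "\<exists>l. ratio g x (trial g \<nu> \<theta> x \<gamma>0 l) \<le> \<nu>"
proof (rule ccontr)
  assume "\<nexists>l. ratio g x (trial g \<nu> \<theta> x \<gamma>0 l) \<le> \<nu>"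
  then have all: "ratio g x (trial g \<nu> \<theta> x \<gamma>0 l) > \<nu>" for l by (meson not_le)
  obtain l where l: "\<theta> ^ l < \<nu> / (L * \<gamma>0)"
    using real_arch_pow_inv[of "\<nu> / (L * \<gamma>0)" \<theta>] \<nu> L \<gamma>0 \<theta> by auto
  have "L * trial g \<nu> \<theta> x \<gamma>0 l \<le> L * (\<gamma>0 * \<theta> ^ l)"
    using trial_le_geometric[of l] all L by simp
  also have "\<dots> < \<nu>" using l L \<gamma>0 by (simp add: less_divide_eq mult_ac)
  finally show False
    using all[of l] ratio_le_lipschitz[OF lip gx trial_pos[of l]] by linarith
qed

lemma linesearch_pos: "0 < linesearch g \<nu> \<theta> x \<gamma>0"
  unfolding linesearch_def by (rule trial_pos)

lemma linesearch_le_init: "linesearch g \<nu> \<theta> x \<gamma>0 \<le> \<gamma>0"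
  unfolding linesearch_def by (rule trial_le_init)

lemma ratio_linesearch_le: "ratio g x (linesearch g \<nu> \<theta> x \<gamma>0) \<le> \<nu>"
  unfolding linesearch_def using trial_terminates by (rule LeastI_ex)

text \<open>Either the initial trial \<open>\<gamma>\<^sub>0\<close> is accepted or the last rejected trial forces the bound.\<close>

lemma linesearch_ge: "min \<gamma>0 (\<theta> * \<nu> / L) \<le> linesearch g \<nu> \<theta> x \<gamma>0"
proof (cases "LEAST l. ratio g x (trial g \<nu> \<theta> x \<gamma>0 l) \<le> \<nu>")
  case (Suc j)
  then have "\<not> ratio g x (trial g \<nu> \<theta> x \<gamma>0 j) \<le> \<nu>"
    using not_less_Least[of j] by (metis lessI)
  then show ?thesis
    using trial_Suc_ge[of j] Suc by (simp add: linesearch_def)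
qed (simp add: linesearch_def)

end

lemma inner_ge_of_norm_diff_le:
  fixes a b :: "'a::real_inner"
  assumes "norm (b - a) \<le> \<nu> * norm a"
  shows "(1 - \<nu>) * (norm a)\<^sup>2 \<le> inner a b"
proof -
  have "inner a b = (norm a)\<^sup>2 + inner a (b - a)"
    by (simp add: inner_diff_right power2_norm_eq_inner)
  moreover have "- (norm a * norm (b - a)) \<le> inner a (b - a)"
    using Cauchy_Schwarz_ineq2[of a "b - a"] by (simp add: abs_le_iff)
  moreover have "norm a * norm (b - a) \<le> norm a * (\<nu> * norm a)"
    using assms by (simp add: mult_left_mono)
  ultimately show ?thesis by (simp add: power2_eq_square algebra_simps)
qed

lemma norm_add_scaleR_diff_le:
  fixes a b :: "'a::real_normed_vector"
  assumes "norm (b - a) \<le> \<nu> * norm a" and "0 \<le> \<beta>"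
  shows "norm (a + \<beta> *\<^sub>R (b - a)) \<le> (1 + \<beta> * \<nu>) * norm a"
proof -
  have "norm (a + \<beta> *\<^sub>R (b - a)) \<le> norm a + \<beta> * norm (b - a)"
    using norm_triangle_ineq[of a "\<beta> *\<^sub>R (b - a)"] assms(2) by simp
  also have "\<dots> \<le> norm a + \<beta> * (\<nu> * norm a)"
    using assms by (simp add: mult_left_mono)
  finally show ?thesis by (simp add: algebra_simps)
qed

lemma norm_add_scaleR_diff_ge:
  fixes a b :: "'a::real_normed_vector"
  assumes "norm (b - a) \<le> \<nu> * norm a" and "0 \<le> \<beta>"
  shows "(1 - \<beta> * \<nu>) * norm a \<le> norm (a + \<beta> *\<^sub>R (b - a))"
proof -
  have "norm a - \<beta> * (\<nu> * norm a) \<le> norm a - \<beta> * norm (b - a)"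
    using assms by (simp add: mult_left_mono)
  also have "\<dots> \<le> norm (a + \<beta> *\<^sub>R (b - a))"
    using norm_triangle_ineq2[of a "- (\<beta> *\<^sub>R (b - a))"] assms(2) by simp
  finally show ?thesis by (simp add: algebra_simps)
qed

lemma norm_add_scaleR_diff_bounds:
  fixes a b :: "'a::real_normed_vector"
  assumes ratio: "norm (b - a) \<le> \<nu> * norm a" and "a \<noteq> 0"
    and \<nu>: "0 < \<nu>" "\<nu> < 1" and \<beta>: "0 \<le> \<beta>" "\<beta> \<le> 1"
  shows "0 < norm (a + \<beta> *\<^sub>R (b - a))"
    and "(norm (a + \<beta> *\<^sub>R (b - a)))\<^sup>2 \<le> (2 + 2 * \<beta>\<^sup>2 * \<nu>\<^sup>2) * (norm a)\<^sup>2"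
proof -
  have "\<beta> * \<nu> < 1" using mult_right_mono[OF \<beta>(2) less_imp_le[OF \<nu>(1)]] \<nu> by linarith
  then have "0 < (1 - \<beta> * \<nu>) * norm a" using \<open>a \<noteq> 0\<close> by simp
  then show "0 < norm (a + \<beta> *\<^sub>R (b - a))"
    using norm_add_scaleR_diff_ge[OF ratio \<beta>(1)] by linarith
  have "(norm (a + \<beta> *\<^sub>R (b - a)))\<^sup>2 \<le> ((1 + \<beta> * \<nu>) * norm a)\<^sup>2"
    using norm_add_scaleR_diff_le[OF ratio \<beta>(1)] by (simp add: power_mono)
  also have "\<dots> \<le> (2 + 2 * \<beta>\<^sup>2 * \<nu>\<^sup>2) * (norm a)\<^sup>2"
  proof -
    have "(1 + \<beta> * \<nu>)\<^sup>2 \<le> 2 + 2 * \<beta>\<^sup>2 * \<nu>\<^sup>2"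
      using sum_squares_ge_zero[of "1 - \<beta> * \<nu>" 0] by (simp add: power2_eq_square algebra_simps)
    from mult_right_mono[OF this, of "(norm a)\<^sup>2"] show ?thesis by (simp add: power_mult_distrib)
  qed
  finally show "(norm (a + \<beta> *\<^sub>R (b - a)))\<^sup>2 \<le> (2 + 2 * \<beta>\<^sup>2 * \<nu>\<^sup>2) * (norm a)\<^sup>2" .
qed

lemma relaxed_step_dist_le:
  fixes x xs d :: "'a::real_inner"
  assumes N: "\<alpha> * (norm d)\<^sup>2 = N" and corr: "h\<^sup>2 * N \<le> h * inner d (x - xs)"
    and "0 \<le> \<alpha>" "0 \<le> \<eta>"
  shows "(norm (x - (\<eta> * \<alpha> * h) *\<^sub>R d - xs))\<^sup>2 \<le> (norm (x - xs))\<^sup>2 - \<eta> * (2 - \<eta>) * h\<^sup>2 * (\<alpha> * N)"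
proof -
  define s where "s = \<eta> * \<alpha> * h"
  have "(norm (x - s *\<^sub>R d - xs))\<^sup>2 = (norm (x - xs))\<^sup>2 - 2 * s * inner d (x - xs) + s\<^sup>2 * (norm d)\<^sup>2"
    by (simp only: power2_norm_eq_inner inner_diff_left inner_diff_right inner_scaleR_left
        inner_scaleR_right) (simp add: inner_commute power2_eq_square algebra_simps)
  moreover have "2 * \<eta> * \<alpha> * (h\<^sup>2 * N) \<le> 2 * s * inner d (x - xs)"
    using mult_left_mono[OF corr, of "2 * \<eta> * \<alpha>"] assms by (simp add: s_def mult_ac)
  moreover have "s\<^sup>2 * (norm d)\<^sup>2 = \<eta>\<^sup>2 * \<alpha> * h\<^sup>2 * N"
    by (simp add: s_def N[symmetric] power2_eq_square)
  moreover have "\<eta> * (2 - \<eta>) * h\<^sup>2 * (\<alpha> * N) = 2 * \<eta> * \<alpha> * (h\<^sup>2 * N) - \<eta>\<^sup>2 * \<alpha> * h\<^sup>2 * N"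
    by (simp add: power2_eq_square algebra_simps)
  ultimately show ?thesis unfolding s_def[symmetric] by linarith
qed

lemma convex_gderiv_mixed_direction_inner_ge:
  fixes f :: "'a::real_inner \<Rightarrow> real" and x xs :: 'a
  assumes convex: "convex_on UNIV f" and grad: "\<And>x. GDERIV f x :> g x"
    and lip: "L-lipschitz_on UNIV g" and L: "L > 0" and xs: "g xs = 0"
    and h: "0 < h" and \<beta>: "0 \<le> \<beta>" "\<beta> \<le> 1"
  defines "z \<equiv> x - h *\<^sub>R g x"
  shows "h\<^sup>2 * ((1 - \<beta>) * (1 - L * h / 4) * (norm (g x))\<^sup>2 + \<beta> * inner (g x) (g z))
    \<le> h * inner (g x - \<beta> *\<^sub>R (g x - g z)) (x - xs)"
proof -
  have cocoercive: "(norm (g x))\<^sup>2 / L \<le> inner (g x) (x - xs)"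
    by (rule convex_gderiv_cocoercive_at_min[OF convex grad lip L xs])
  have "x - xs = (z - xs) + h *\<^sub>R g x" by (simp add: z_def)
  then have "inner (g z) (x - xs) = inner (g z) (z - xs) + h * inner (g x) (g z)"
    by (simp only: inner_add_right inner_scaleR_right inner_commute)
  then have monotone: "h * inner (g x) (g z) \<le> inner (g z) (x - xs)"
    using convex_gderiv_monotone_at_min[OF convex grad xs, of z] by linarith
  have "h\<^sup>2 * (1 - L * h / 4) \<le> h / L"
  proof -
    have "h / L - h\<^sup>2 * (1 - L * h / 4) = h / L * (1 - L * h / 2)\<^sup>2"
      using L by (simp add: power2_eq_square field_simps)
    moreover have "0 \<le> h / L * (1 - L * h / 2)\<^sup>2" using h L by simp
    ultimately show ?thesis by linarith
  qed
  then have "h\<^sup>2 * (1 - L * h / 4) * (norm (g x))\<^sup>2 \<le> h * inner (g x) (x - xs)"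
    using cocoercive h mult_right_mono[of "h\<^sup>2 * (1 - L * h / 4)" "h / L" "(norm (g x))\<^sup>2"]
      mult_left_mono[of "(norm (g x))\<^sup>2 / L" "inner (g x) (x - xs)" h]
    by (simp add: mult_ac)
  then have "(1 - \<beta>) * (h\<^sup>2 * (1 - L * h / 4) * (norm (g x))\<^sup>2) \<le> (1 - \<beta>) * (h * inner (g x) (x - xs))"
    using \<beta> by (intro mult_left_mono) auto
  moreover have "\<beta> * (h * (h * inner (g x) (g z))) \<le> \<beta> * (h * inner (g z) (x - xs))"
    using monotone h \<beta> by (intro mult_left_mono) auto
  ultimately show ?thesis
    by (simp add: inner_diff_left power2_eq_square algebra_simps)
qed

lemma quadratic_quotient_ge:
  fixes c D n N m :: real
  assumes "0 \<le> c" "0 < D" "0 < n" "c * n \<le> N" "0 < m" "m \<le> D * n"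
  shows "c / D * c * n \<le> N\<^sup>2 / m"
proof -
  have "c / D * c * n = (c * n)\<^sup>2 / (D * n)"
    using assms by (simp add: power2_eq_square field_simps)
  also have "\<dots> \<le> N\<^sup>2 / (D * n)"
    using assms by (intro divide_right_mono power_mono) auto
  also have "\<dots> \<le> N\<^sup>2 / m"
    using assms by (intro divide_left_mono) auto
  finally show ?thesis .
qed

lemma alg3_rate_constant_pos:
  fixes L hup \<nu> \<beta> :: real
  assumes "L > 0" "hup < 4 / L" "\<nu> < 1" "0 \<le> \<beta>" "\<beta> \<le> 1"
  shows "0 < (1 - \<beta>) * (1 - L * hup / 4) + \<beta> * (1 - \<nu>)"
proof -
  define m where "m = min (1 - L * hup / 4) (1 - \<nu>)"
  have "L * hup < 4" using assms by (simp add: less_divide_eq mult.commute)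
  then have "0 < m" using assms by (simp add: m_def)
  moreover have "(1 - \<beta>) * m \<le> (1 - \<beta>) * (1 - L * hup / 4)" "\<beta> * m \<le> \<beta> * (1 - \<nu>)"
    using assms by (auto intro: mult_left_mono simp: m_def)
  moreover have "(1 - \<beta>) * m + \<beta> * m = m" by (simp add: algebra_simps)
  ultimately show ?thesis by linarith
qed

lemma fst_alg3_step:
  fixes g :: "'a::real_inner \<Rightarrow> 'a" and x :: 'a and L \<nu> \<theta> \<gamma> \<beta> :: real
  defines "h \<equiv> linesearch g \<nu> \<theta> x \<gamma>"
  defines "z \<equiv> x - h *\<^sub>R g x"
  defines "d \<equiv> g x - \<beta> *\<^sub>R (g x - g z)"
  defines "N \<equiv> (1 - \<beta>) * (1 - L * h / 4) * (norm (g x))\<^sup>2 + \<beta> * inner (g x) (g z)"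
  assumes "0 < h"
  shows "fst (alg3_step g L \<mu> \<nu> hlo hup \<beta> \<theta> \<tau> \<eta> (x, \<gamma>)) = x - (\<eta> * (N / (norm d)\<^sup>2) * h) *\<^sub>R d"
proof -
  have xz: "x - z = h *\<^sub>R g x" by (simp add: z_def)
  have "(1 - \<beta>) * (1 - L * h / 4) * (norm (x - z))\<^sup>2 + \<beta> * inner (x - z) (h *\<^sub>R g z) = h\<^sup>2 * N"
    unfolding xz using \<open>0 < h\<close> by (simp add: N_def power2_eq_square algebra_simps)
  then have "((1 - \<beta>) * (1 - L * h / 4) * (norm (x - z))\<^sup>2 + \<beta> * inner (x - z) (h *\<^sub>R g z))
      / (h\<^sup>2 * (norm d)\<^sup>2) = N / (norm d)\<^sup>2"
    using \<open>0 < h\<close> by simp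
  then show ?thesis
    by (simp only: alg3_step_def Let_def fst_conv snd_conv h_def[symmetric] z_def[symmetric]
        d_def[symmetric])
qed

lemma alg3_step_dist_le:
  fixes f :: "'a::real_inner \<Rightarrow> real" and x xs :: 'a
  assumes convex: "convex_on UNIV f" and grad: "\<And>x. GDERIV f x :> g x"
    and lip: "L-lipschitz_on UNIV g" and L: "L > 0" and xs: "g xs = 0" and gx: "g x \<noteq> 0"
    and \<nu>: "0 < \<nu>" "\<nu> < 1" and \<theta>: "0 < \<theta>" "\<theta> < 1" and \<beta>: "0 \<le> \<beta>" "\<beta> \<le> 1"
    and \<eta>: "0 < \<eta>" "\<eta> < 2" and \<gamma>: "0 < \<gamma>" "\<gamma> \<le> hup" and hup: "hup < 4 / L"
    and hmin: "0 \<le> hmin" "hmin \<le> min \<gamma> (\<theta> * \<nu> / L)"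
  defines "c \<equiv> (1 - \<beta>) * (1 - L * hup / 4) + \<beta> * (1 - \<nu>)"
  shows "(norm (fst (alg3_step g L \<mu> \<nu> hlo hup \<beta> \<theta> \<tau> \<eta> (x, \<gamma>)) - xs))\<^sup>2
    \<le> (norm (x - xs))\<^sup>2 - \<eta> * (2 - \<eta>) * (c / (2 + 2 * \<beta>\<^sup>2 * \<nu>\<^sup>2)) * c * hmin\<^sup>2 * (norm (g x))\<^sup>2"
proof -
  define h where "h = linesearch g \<nu> \<theta> x \<gamma>"
  define z where "z = x - h *\<^sub>R g x"
  define d where "d = g x - \<beta> *\<^sub>R (g x - g z)"
  define N where "N = (1 - \<beta>) * (1 - L * h / 4) * (norm (g x))\<^sup>2 + \<beta> * inner (g x) (g z)"
  define \<alpha> where "\<alpha> = N / (norm d)\<^sup>2"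
  have h: "0 < h" "h \<le> hup" "hmin \<le> h" "ratio g x h \<le> \<nu>"
    using linesearch_pos[OF lip L gx \<nu> \<theta> \<gamma>(1)] linesearch_le_init[OF lip L gx \<nu> \<theta> \<gamma>(1)]
      linesearch_ge[OF lip L gx \<nu> \<theta> \<gamma>(1)] ratio_linesearch_le[OF lip L gx \<nu> \<theta> \<gamma>(1)] \<gamma> hmin
    by (auto simp: h_def)
  have step: "fst (alg3_step g L \<mu> \<nu> hlo hup \<beta> \<theta> \<tau> \<eta> (x, \<gamma>)) = x - (\<eta> * \<alpha> * h) *\<^sub>R d"
    using fst_alg3_step[of g \<nu> \<theta> x \<gamma>] h(1) by (simp add: \<alpha>_def N_def d_def z_def h_def)
  have d_eq: "d = g x + \<beta> *\<^sub>R (g z - g x)" by (simp add: d_def algebra_simps)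
  have ratio: "norm (g z - g x) \<le> \<nu> * norm (g x)"
    using h(4) gx ratio_eq[of g x h] h(1) by (simp add: z_def divide_le_eq)
  have c: "0 < c" unfolding c_def by (rule alg3_rate_constant_pos[OF L hup \<nu>(2) \<beta>])
  have "(1 - \<beta>) * (1 - L * hup / 4) * (norm (g x))\<^sup>2 \<le> (1 - \<beta>) * (1 - L * h / 4) * (norm (g x))\<^sup>2"
    using \<beta> h L by (intro mult_right_mono mult_left_mono) auto
  moreover have "\<beta> * ((1 - \<nu>) * (norm (g x))\<^sup>2) \<le> \<beta> * inner (g x) (g z)"
    using inner_ge_of_norm_diff_le[OF ratio] \<beta> by (intro mult_left_mono) auto
  moreover have "c * (norm (g x))\<^sup>2
      = (1 - \<beta>) * (1 - L * hup / 4) * (norm (g x))\<^sup>2 + \<beta> * ((1 - \<nu>) * (norm (g x))\<^sup>2)"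
    by (simp add: c_def algebra_simps)
  ultimately have Nc: "c * (norm (g x))\<^sup>2 \<le> N" by (simp add: N_def)
  note d_bounds = norm_add_scaleR_diff_bounds[OF ratio gx \<nu> \<beta>, folded d_eq]
  have "c / (2 + 2 * \<beta>\<^sup>2 * \<nu>\<^sup>2) * c * (norm (g x))\<^sup>2 \<le> N\<^sup>2 / (norm d)\<^sup>2"
    using quadratic_quotient_ge[OF less_imp_le[OF c] _ _ Nc _ d_bounds(2)] d_bounds(1) gx
    by (simp add: add_pos_nonneg)
  then have \<alpha>N: "c / (2 + 2 * \<beta>\<^sup>2 * \<nu>\<^sup>2) * c * (norm (g x))\<^sup>2 \<le> \<alpha> * N"
    by (simp add: \<alpha>_def power2_eq_square)
  have "(norm (x - (\<eta> * \<alpha> * h) *\<^sub>R d - xs))\<^sup>2 \<le> (norm (x - xs))\<^sup>2 - \<eta> * (2 - \<eta>) * h\<^sup>2 * (\<alpha> * N)"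
  proof (rule relaxed_step_dist_le)
    show "\<alpha> * (norm d)\<^sup>2 = N" using d_bounds(1) by (simp add: \<alpha>_def)
    show "h\<^sup>2 * N \<le> h * inner d (x - xs)"
      using convex_gderiv_mixed_direction_inner_ge[OF convex grad lip L xs h(1) \<beta>]
      by (simp add: N_def d_def z_def)
    show "0 \<le> \<alpha>" using Nc c by (simp add: \<alpha>_def order_trans[OF _ Nc])
  qed (use \<eta> in simp)
  moreover have "\<eta> * (2 - \<eta>) * (c / (2 + 2 * \<beta>\<^sup>2 * \<nu>\<^sup>2)) * c * hmin\<^sup>2 * (norm (g x))\<^sup>2
      \<le> \<eta> * (2 - \<eta>) * h\<^sup>2 * (\<alpha> * N)"
  proof -
    have "hmin\<^sup>2 * (c / (2 + 2 * \<beta>\<^sup>2 * \<nu>\<^sup>2) * c * (norm (g x))\<^sup>2) \<le> h\<^sup>2 * (\<alpha> * N)"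
      using c h hmin by (intro mult_mono[OF power_mono \<alpha>N]) (auto intro: add_pos_nonneg)
    then have "\<eta> * (2 - \<eta>) * (hmin\<^sup>2 * (c / (2 + 2 * \<beta>\<^sup>2 * \<nu>\<^sup>2) * c * (norm (g x))\<^sup>2))
        \<le> \<eta> * (2 - \<eta>) * (h\<^sup>2 * (\<alpha> * N))"
      using \<eta> by (intro mult_left_mono) auto
    then show ?thesis by (simp only: mult_ac)
  qed
  ultimately show ?thesis unfolding step by linarith
qed

lemma alg3_stepsize_bounds:
  assumes "hlo \<le> hup" "hlo \<le> \<gamma>00" "\<gamma>00 \<le> hup"
  shows "hlo \<le> snd (alg3 g L \<mu> \<nu> hlo hup \<beta> \<theta> \<tau> \<eta> x0 \<gamma>00 k)
    \<and> snd (alg3 g L \<mu> \<nu> hlo hup \<beta> \<theta> \<tau> \<eta> x0 \<gamma>00 k) \<le> hup"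
  by (cases k) (use assms in \<open>auto simp: alg3_step_def Let_def proj_interval_def\<close>)

lemma step_size_floor_le:
  fixes L hup \<nu> \<theta> :: real
  assumes "L > 0" "1 \<le> hup" "0 < \<nu>" "0 < \<theta>"
  shows "\<nu> * \<theta> / (hup * (max L 1)\<^sup>2) \<le> \<theta> * \<nu> / L"
proof -
  have m: "1 \<le> max L 1" by simp
  have "L \<le> max L 1" by simp
  also have "\<dots> \<le> (max L 1)\<^sup>2" using mult_left_mono[OF m, of "max L 1"] by (simp add: power2_eq_square)
  also have "\<dots> \<le> hup * (max L 1)\<^sup>2" using mult_right_mono[OF assms(2), of "(max L 1)\<^sup>2"] by simp
  finally have "\<nu> * \<theta> / (hup * (max L 1)\<^sup>2) \<le> \<nu> * \<theta> / L"
    by (rule divide_left_mono) (use assms in auto)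
  then show ?thesis by (simp add: mult.commute)
qed

lemma alg3_dist_decrease:
  fixes f :: "'a::real_inner \<Rightarrow> real" and x0 xs :: 'a
  assumes convex: "convex_on UNIV f" and grad: "\<And>x. GDERIV f x :> g x"
    and lip: "L-lipschitz_on UNIV g" and L: "L > 0" and xs: "g xs = 0"
    and \<nu>: "0 < \<nu>" "\<nu> < 1" and \<theta>: "0 < \<theta>" "\<theta> < 1" and \<beta>: "0 \<le> \<beta>" "\<beta> \<le> 1"
    and \<eta>: "0 < \<eta>" "\<eta> < 2"
    and h: "0 < hlo" "hlo \<le> \<gamma>00" "\<gamma>00 \<le> hup" "hup < 4 / L"
    and hmin: "0 \<le> hmin" "hmin \<le> min hlo (\<theta> * \<nu> / L)"
    and nonstop: "g (fst (alg3 g L \<mu> \<nu> hlo hup \<beta> \<theta> \<tau> \<eta> x0 \<gamma>00 k)) \<noteq> 0"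
  defines "c \<equiv> (1 - \<beta>) * (1 - L * hup / 4) + \<beta> * (1 - \<nu>)"
  shows "(norm (fst (alg3 g L \<mu> \<nu> hlo hup \<beta> \<theta> \<tau> \<eta> x0 \<gamma>00 (Suc k)) - xs))\<^sup>2
    \<le> (norm (fst (alg3 g L \<mu> \<nu> hlo hup \<beta> \<theta> \<tau> \<eta> x0 \<gamma>00 k) - xs))\<^sup>2
    - \<eta> * (2 - \<eta>) * (c / (2 + 2 * \<beta>\<^sup>2 * \<nu>\<^sup>2)) * c * hmin\<^sup>2
      * (norm (g (fst (alg3 g L \<mu> \<nu> hlo hup \<beta> \<theta> \<tau> \<eta> x0 \<gamma>00 k))))\<^sup>2"
proof -
  obtain x \<gamma> where state: "alg3 g L \<mu> \<nu> hlo hup \<beta> \<theta> \<tau> \<eta> x0 \<gamma>00 k = (x, \<gamma>)" by fastforce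
  have \<gamma>: "hlo \<le> \<gamma>" "\<gamma> \<le> hup"
    using alg3_stepsize_bounds[of hlo hup \<gamma>00 g L \<mu> \<nu> \<beta> \<theta> \<tau> \<eta> x0 k] h state by auto
  then have "0 < \<gamma>" "hmin \<le> min \<gamma> (\<theta> * \<nu> / L)" using h(1) hmin by auto
  with \<gamma> show ?thesis
    using alg3_step_dist_le[OF convex grad lip L xs _ \<nu> \<theta> \<beta> \<eta> _ _ h(4) hmin(1)] nonstop state
    by (simp add: c_def)
qed

lemma sum_le_of_decrease:
  fixes u v :: "nat \<Rightarrow> real"
  assumes "\<And>k. u (Suc k) \<le> u k - v k"
  shows "(\<Sum>k<n. v k) \<le> u 0 - u n"
proof (induction n)
  case (Suc n)
  then show ?case using assms[of n] by simp
qed simp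

lemma alg3_mean_sq_grad_le:
  fixes f :: "'a::real_inner \<Rightarrow> real" and x0 xs :: 'a
  assumes convex: "convex_on UNIV f" and grad: "\<And>x. GDERIV f x :> g x"
    and lip: "L-lipschitz_on UNIV g" and L: "L > 0" and xs: "g xs = 0"
    and \<nu>: "0 < \<nu>" "\<nu> < 1" and \<theta>: "0 < \<theta>" "\<theta> < 1" and \<beta>: "0 \<le> \<beta>" "\<beta> \<le> 1"
    and \<eta>: "0 < \<eta>" "\<eta> < 2"
    and h: "0 < hlo" "hlo \<le> \<gamma>00" "\<gamma>00 \<le> hup" "hup < 4 / L"
    and hmin: "0 < hmin" "hmin \<le> min hlo (\<theta> * \<nu> / L)"
    and nonstop: "\<And>k. g (fst (alg3 g L \<mu> \<nu> hlo hup \<beta> \<theta> \<tau> \<eta> x0 \<gamma>00 k)) \<noteq> 0"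
    and K: "1 \<le> K"
  defines "c \<equiv> (1 - \<beta>) * (1 - L * hup / 4) + \<beta> * (1 - \<nu>)"
  defines "\<kappa> \<equiv> \<eta> * (2 - \<eta>) * (c / (2 + 2 * \<beta>\<^sup>2 * \<nu>\<^sup>2)) * c"
  shows "1 / real K * (\<Sum>k<K. (norm (g (fst (alg3 g L \<mu> \<nu> hlo hup \<beta> \<theta> \<tau> \<eta> x0 \<gamma>00 k))))\<^sup>2)
    \<le> (norm (x0 - xs))\<^sup>2 / (real K * \<kappa> * hmin\<^sup>2)"
proof -
  have "0 < c" unfolding c_def by (rule alg3_rate_constant_pos[OF L h(4) \<nu>(2) \<beta>])
  then have pos: "0 < \<kappa> * hmin\<^sup>2" using hmin \<eta> by (simp add: \<kappa>_def add_pos_nonneg)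
  have "(\<Sum>k<K. \<kappa> * hmin\<^sup>2 * (norm (g (fst (alg3 g L \<mu> \<nu> hlo hup \<beta> \<theta> \<tau> \<eta> x0 \<gamma>00 k))))\<^sup>2)
      \<le> (norm (fst (alg3 g L \<mu> \<nu> hlo hup \<beta> \<theta> \<tau> \<eta> x0 \<gamma>00 0) - xs))\<^sup>2
        - (norm (fst (alg3 g L \<mu> \<nu> hlo hup \<beta> \<theta> \<tau> \<eta> x0 \<gamma>00 K) - xs))\<^sup>2"
    using alg3_dist_decrease[OF convex grad lip L xs \<nu> \<theta> \<beta> \<eta> h less_imp_le[OF hmin(1)] hmin(2) nonstop]
    unfolding \<kappa>_def c_def by (intro sum_le_of_decrease) (simp add: mult_ac)
  then have "\<kappa> * hmin\<^sup>2 * (\<Sum>k<K. (norm (g (fst (alg3 g L \<mu> \<nu> hlo hup \<beta> \<theta> \<tau> \<eta> x0 \<gamma>00 k))))\<^sup>2)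
      \<le> (norm (x0 - xs))\<^sup>2"
    by (simp add: sum_distrib_left) (smt (verit) zero_le_power2)
  then have "(\<Sum>k<K. (norm (g (fst (alg3 g L \<mu> \<nu> hlo hup \<beta> \<theta> \<tau> \<eta> x0 \<gamma>00 k))))\<^sup>2) / real K
      \<le> (norm (x0 - xs))\<^sup>2 / (\<kappa> * hmin\<^sup>2) / real K"
    using pos by (intro divide_right_mono) (simp_all add: pos_le_divide_eq mult.commute)
  then show ?thesis by (simp add: mult_ac)
qed

theorem theorem6:
  fixes f :: "real ^ 'n \<Rightarrow> real" and g :: "real ^ 'n \<Rightarrow> real ^ 'n"
    and L \<mu> \<nu> hlo hup \<gamma>00 \<beta> \<theta> \<tau> \<eta> :: real and x0 :: "real ^ 'n"
  assumes convex: "convex_on UNIV f"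
    and grad: "\<And>x. GDERIV f x :> g x"
    and lip: "L-lipschitz_on UNIV g"
    and Lpos: "L > 0"
    and nonempty: "\<exists>x. g x = 0"
    and par_mu_nu: "0 < \<mu>" "\<mu> < \<nu>" "\<nu> < 1"
    and par_h: "0 < hlo" "hlo < 1" "1 \<le> \<gamma>00" "\<gamma>00 \<le> hup" "hup < 4 / L"
    and par_beta: "0 \<le> \<beta>" "\<beta> \<le> 1"
    and par_theta: "0 < \<theta>" "\<theta> < 1"
    and par_tau: "\<tau> > 1"
    and par_eta: "0 < \<eta>" "\<eta> < 2"
    and nonstop: "\<And>k. g (fst (alg3 g L \<mu> \<nu> hlo hup \<beta> \<theta> \<tau> \<eta> x0 \<gamma>00 k)) \<noteq> 0"
  shows "\<forall>xs K. g xs = 0 \<longrightarrow> K \<ge> 1 \<longrightarrow>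
    (let x = (\<lambda>k. fst (alg3 g L \<mu> \<nu> hlo hup \<beta> \<theta> \<tau> \<eta> x0 \<gamma>00 k));
         c = (1 - \<beta>) * (1 - L * hup / 4) + \<beta> * (1 - \<nu>);
         \<alpha>min = c / (2 + 2 * \<beta>\<^sup>2 * \<nu>\<^sup>2);
         \<kappa>4 = \<eta> * (2 - \<eta>) * \<alpha>min * c;
         hmin = min hlo (\<nu> * \<theta> / (hup * (max L 1)\<^sup>2))
     in (1 / real K) * (\<Sum>k<K. (norm (g (x k)))\<^sup>2)
          \<le> (norm (x0 - xs))\<^sup>2 / (real K * \<kappa>4 * hmin\<^sup>2))"
proof -
  define hmin where "hmin = min hlo (\<nu> * \<theta> / (hup * (max L 1)\<^sup>2))"
  have "0 < hmin" "hmin \<le> min hlo (\<theta> * \<nu> / L)"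
    using step_size_floor_le[OF Lpos _ _ par_theta(1), of hup \<nu>] par_h par_mu_nu par_theta
    by (auto simp: hmin_def)
  moreover have "0 < \<nu>" using par_mu_nu by linarith
  moreover have "hlo \<le> \<gamma>00" using par_h by linarith
  ultimately show ?thesis
    using alg3_mean_sq_grad_le[OF convex grad lip Lpos _ _ par_mu_nu(3) par_theta par_beta par_eta
        par_h(1) _ par_h(4,5) _ _ nonstop]
    unfolding Let_def hmin_def[symmetric] by blast
qed

end
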